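(* Let $U:\mathbb R^m_{++}\to\mathbb R$ be concave and let $s^{opt}$ be a maximizer of $U$ over $B_s$. Let $w'\in W$ have weighted center $(x',y',s')$ and let $g'$ be a supergradient of $U$ at $s'$. Put $g'_w:=(Y')^{-1}g'$. Then $$(g'_w)^{\top}\bigl(S^{opt}y'-w'\bigr)\ \ge\ 0,$$ i.e. $S^{opt}y'$ lies in the half-space $\{w:(g'_w)^\top(w-w')\ge 0\}$.
   Context: Let $A\in\mathbb R^{m\times n}$ have full column rank $n\le m$ and $b\in\mathbb R^m$ be such that $\{x\in\mathbb R^n:Ax\le b\}$ is bounded with nonempty interior. For $w\in\mathbb R^m_{++}$ the weighted center of $w$ is the unique $(x,y,s)\in\mathbb R^n\times\mathbb R^m\times\mathbb R^m$ with $Ax+s=b$, $s>0$, $A^\top y=0$, $\mathrm{Diag}(s)y=w$; we call $s$ and $y$ its $s$-vector and $y$-vector. Capital letters denote diagonal matrices of the corresponding vectors ($Y=\mathrm{Diag}(y)$, $S^{opt}=\mathrm{Diag}(s^{opt})$, etc.). $W=\{w\in\mathbb R^m:w>0,\ e^\top w=1\}$ ($e$ the all-ones vector). A vector is a centric $s$-vector (resp. $y$-vector) if it is the $s$-vector (resp. $y$-vector) of the weighted center of some $w\in W$; $B_s$ is the set of centric $s$-vectors. A supergradient of a concave $U$ at $s^0$ is a vector $g$ with $U(s)\le U(s^0)+g^\top(s-s^0)$ for all $s$ in the domain. *)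

theory Defs
  imports "HOL-Analysis.Analysis"
begin

definition weighted_center ::
  "real^'n^'m \<Rightarrow> real^'m \<Rightarrow> real^'m \<Rightarrow> real^'n \<Rightarrow> real^'m \<Rightarrow> real^'m \<Rightarrow> bool" where
  "weighted_center A b w x y s \<longleftrightarrow>
     A *v x + s = b \<and> (\<forall>i. s $ i > 0) \<and> transpose A *v y = 0 \<and> (\<forall>i. s $ i * y $ i = w $ i)"

definition weight_simplex :: "(real^'m) set" where
  "weight_simplex = {w. (\<forall>i. w $ i > 0) \<and> (\<Sum>i\<in>UNIV. w $ i) = 1}"

definition centric_s_vectors :: "real^'n^'m \<Rightarrow> real^'m \<Rightarrow> (real^'m) set" where
  "centric_s_vectors A b = {s. \<exists>w\<in>weight_simplex. \<exists>x y. weighted_center A b w x y s}"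

definition pos_orthant :: "(real^'m) set" where
  "pos_orthant = {s. \<forall>i. s $ i > 0}"

definition supergradient :: "(real^'m \<Rightarrow> real) \<Rightarrow> (real^'m) set \<Rightarrow> real^'m \<Rightarrow> real^'m \<Rightarrow> bool" where
  "supergradient U D s0 g \<longleftrightarrow> (\<forall>s\<in>D. U s \<le> U s0 + g \<bullet> (s - s0))"

end

theory Submission
  imports Defs
begin

text \<open>Since the s-vector s' of w' is itself centric, U s' \<le> U sopt, and the supergradient
  inequality at s' then forces g' \<bullet> (sopt - s') \<ge> 0. Rescaling coordinatewise by y' > 0
  turns this into the claim, because S' y' = w'. Concavity of U, and the hypotheses on A and b,
  are only needed to guarantee that a supergradient and a maximiser exist; the argument
  itself does not use them.\<close>

lemma supergradient_nonneg_towards_better: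
  assumes "supergradient U D s0 g" and "s1 \<in> D" and "U s0 \<le> U s1"
  shows "g \<bullet> (s1 - s0) \<ge> 0"
  using assms unfolding supergradient_def by force

lemma inner_divide_times_diff:
  fixes g s t w y :: "real^'m"
  assumes "\<And>i. y $ i \<noteq> 0" and "\<And>i. w $ i = s $ i * y $ i"
  shows "(\<chi> i. g $ i / y $ i) \<bullet> ((\<chi> i. t $ i * y $ i) - w) = g \<bullet> (t - s)"
  unfolding inner_vec_def
  by (rule sum.cong[OF refl]) (simp add: assms field_simps)

lemma weighted_center_y_pos:
  assumes "weighted_center A b w x y s" and "w $ i > 0"
  shows "y $ i > 0"
  using assms unfolding weighted_center_def by (metis zero_less_mult_pos)

lemma centric_s_vectors_subset_pos_orthant: "centric_s_vectors A b \<subseteq> pos_orthant"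
  unfolding centric_s_vectors_def weighted_center_def pos_orthant_def by auto

lemma weighted_center_centric:
  assumes "w \<in> weight_simplex" and "weighted_center A b w x y s"
  shows "s \<in> centric_s_vectors A b"
  using assms unfolding centric_s_vectors_def by blast

theorem lemma3p2:
  fixes A :: "real^'n^'m" and b :: "real^'m" and U :: "real^'m \<Rightarrow> real"
    and sopt w' y' s' g' :: "real^'m" and x' :: "real^'n"
  assumes rankA: "rank A = CARD('n)"
    and nm: "CARD('n) \<le> CARD('m)"
    and bdd: "bounded {x. \<forall>i. (A *v x) $ i \<le> b $ i}"
    and int: "interior {x. \<forall>i. (A *v x) $ i \<le> b $ i} \<noteq> {}"
    and conc: "concave_on pos_orthant U"
    and sopt_in: "sopt \<in> centric_s_vectors A b"
    and sopt_max: "\<forall>s\<in>centric_s_vectors A b. U s \<le> U sopt"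
    and w'W: "w' \<in> weight_simplex"
    and wc: "weighted_center A b w' x' y' s'"
    and sg: "supergradient U pos_orthant s' g'"
  shows "(\<chi> i. g' $ i / y' $ i) \<bullet> ((\<chi> i. sopt $ i * y' $ i) - w') \<ge> 0"
proof -
  have "U s' \<le> U sopt"
    using sopt_max weighted_center_centric[OF w'W wc] by blast
  moreover have "sopt \<in> pos_orthant"
    using sopt_in centric_s_vectors_subset_pos_orthant by blast
  ultimately have "g' \<bullet> (sopt - s') \<ge> 0"
    using supergradient_nonneg_towards_better[OF sg] by blast
  moreover have "y' $ i \<noteq> 0" for i
  proof -
    have "w' $ i > 0" using w'W unfolding weight_simplex_def by blast
    then show ?thesis using weighted_center_y_pos[OF wc] by (metis less_irrefl)
  qed
  moreover have "w' $ i = s' $ i * y' $ i" for i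
    using wc unfolding weighted_center_def by simp
  ultimately show ?thesis
    by (simp add: inner_divide_times_diff)
qed

end
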